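(* Let $G$ be a finitely generated group and $\psi$ a minimal action of $G$ by orientation-preserving homeomorphisms of $\mathbb{R}$ such that some nondegenerate bounded interval is $\psi$-contractible, but not every bounded interval is $\psi$-contractible. Define $\varphi(x) := \sup\{ y > x : [x,y] \text{ is } \psi\text{-contractible}\}$. Then $\varphi$ is a (finite-valued) orientation-preserving homeomorphism of $\mathbb{R}$ satisfying $\varphi(x)>x$ for all $x$ and $\varphi\circ\psi(g)=\psi(g)\circ\varphi$ for all $g\in G$. Consequently $\psi$ induces an action of $G$ by homeomorphisms on the quotient $\mathbb{R}/\!\sim$, where $x\sim\varphi(x)$, which is a topological circle.
   Context: A bounded interval $I$ is $\psi$-contractible if there is a sequence $g_n\in G$ such that the intervals $\psi(g_n)(I)$ converge to a point (their lengths tend to $0$ and they converge to a single point). A minimal action is one where every orbit is dense. *)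

theory Defs
  imports "HOL-Analysis.Analysis" "HOL-Algebra.Generated_Groups"
begin

definition fin_gen_group :: "('a, 'b) monoid_scheme \<Rightarrow> bool" where
  "fin_gen_group G \<longleftrightarrow> group G \<and> (\<exists>S. finite S \<and> S \<subseteq> carrier G \<and> generate G S = carrier G)"

definition or_homeo :: "(real \<Rightarrow> real) \<Rightarrow> bool" where
  "or_homeo f \<longleftrightarrow> (\<exists>f'. homeomorphism UNIV UNIV f f') \<and> strict_mono f"

definition or_action :: "('a, 'b) monoid_scheme \<Rightarrow> ('a \<Rightarrow> real \<Rightarrow> real) \<Rightarrow> bool" where
  "or_action G \<psi> \<longleftrightarrow> (\<forall>g\<in>carrier G. or_homeo (\<psi> g)) \<and>
     (\<forall>g\<in>carrier G. \<forall>h\<in>carrier G. \<psi> (g \<otimes>\<^bsub>G\<^esub> h) = \<psi> g \<circ> \<psi> h) \<and>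
     \<psi> \<one>\<^bsub>G\<^esub> = id"

definition minimal_action :: "('a, 'b) monoid_scheme \<Rightarrow> ('a \<Rightarrow> real \<Rightarrow> real) \<Rightarrow> bool" where
  "minimal_action G \<psi> \<longleftrightarrow> (\<forall>x. closure {\<psi> g x | g. g \<in> carrier G} = UNIV)"

text \<open>a (nonempty) bounded interval I is contractible if there are g_n with
  psi(g_n)(I) converging to a point: inf and sup of the images both tend to the same point\<close>
definition contractible :: "('a, 'b) monoid_scheme \<Rightarrow> ('a \<Rightarrow> real \<Rightarrow> real) \<Rightarrow> real set \<Rightarrow> bool" where
  "contractible G \<psi> I \<longleftrightarrow> (\<exists>s p. (\<forall>n. s n \<in> carrier G) \<and>
      ((\<lambda>n. Inf (\<psi> (s n) ` I)) \<longlonglongrightarrow> p) \<and> ((\<lambda>n. Sup (\<psi> (s n) ` I)) \<longlonglongrightarrow> p))"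

definition contr_sup :: "('a, 'b) monoid_scheme \<Rightarrow> ('a \<Rightarrow> real \<Rightarrow> real) \<Rightarrow> real \<Rightarrow> real" where
  "contr_sup G \<psi> x = Sup {y. y > x \<and> contractible G \<psi> {x..y}}"

end

theory Submission
  imports Defs
begin

text \<open>
  Subintervals and \<open>\<psi>\<close>-translates of \<open>\<psi>\<close>-contractible intervals are \<open>\<psi>\<close>-contractible, so
  \<open>\<phi>\<close> is nondecreasing and commutes with the action. By minimality a nondegenerate contractible
  interval can be moved over any point \<open>x\<close>, which gives \<open>\<phi>(x) > x\<close>, and a non-contractible
  interval can be moved to start just right of \<open>x\<close>, which makes \<open>\<phi>(x)\<close> finite. If \<open>\<phi>\<close> were
  constant on an open interval, minimality and equivariance would make it locally constant,
  hence constant, contradicting \<open>\<phi>(x) > x\<close>; so \<open>\<phi>\<close> is strictly increasing, and its image, being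
  invariant, is dense, which makes \<open>\<phi>\<close> a homeomorphism.

  An increasing homeomorphism \<open>f\<close> with \<open>f(x) > x\<close> is conjugate to \<open>t \<mapsto> t + 1\<close> (interpolate
  linearly between \<open>0\<close> and \<open>f(0)\<close> and propagate by the powers of \<open>f\<close>), so composing the inverse
  conjugacy with \<open>t \<mapsto> exp(2\<pi>it)\<close> identifies the orbit space of \<open>f\<close> with the unit circle, and
  homeomorphisms commuting with \<open>f\<close> descend to it.
\<close>

section \<open>Maps of the real line\<close>

lemma strict_mono_dense_range_isCont:
  fixes f :: "real \<Rightarrow> real"
  assumes mono: "strict_mono f" and dense: "\<And>a b. a < b \<Longrightarrow> \<exists>x. a < f x \<and> f x < b"
  shows "isCont f x"
  unfolding continuous_at_eps_delta
proof (intro allI impI)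
  fix e :: real assume "e > 0"
  then obtain u v where u: "f x - e < f u" "f u < f x" and v: "f x < f v" "f v < f x + e"
    using dense[of "f x - e" "f x"] dense[of "f x" "f x + e"] by auto
  have "u < x" "x < v" using u(2) v(1) mono by (metis not_less_iff_gr_or_eq strict_mono_less)+
  show "\<exists>d>0. \<forall>t. dist t x < d \<longrightarrow> dist (f t) (f x) < e"
  proof (intro exI[of _ "min (x - u) (v - x)"] conjI allI impI)
    show "0 < min (x - u) (v - x)" using \<open>u < x\<close> \<open>x < v\<close> by auto
    fix t assume "dist t x < min (x - u) (v - x)"
    then have "f u < f t" "f t < f v" using mono by (auto simp: dist_real_def strict_mono_less)
    then show "dist (f t) (f x) < e" using u v by (auto simp: dist_real_def)
  qed
qed

lemma strict_mono_dense_range_surj: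
  fixes f :: "real \<Rightarrow> real"
  assumes mono: "strict_mono f" and dense: "\<And>a b. a < b \<Longrightarrow> \<exists>x. a < f x \<and> f x < b"
  shows "surj f"
proof -
  have "c \<in> range f" for c
  proof -
    obtain x1 x2 where x12: "f x1 < c" "c < f x2"
      using dense[of "c - 1" c] dense[of c "c + 1"] by auto
    then have "x1 \<le> x2" using strict_mono_less[OF mono, of x1 x2] by simp
    moreover have "continuous_on {x1..x2} f"
      using strict_mono_dense_range_isCont[OF mono dense] by (simp add: continuous_at_imp_continuous_on)
    ultimately obtain x where "f x = c" using IVT'[of f x1 c x2] x12 by auto
    then show ?thesis by blast
  qed
  then show ?thesis by blast
qed

lemma strict_mono_surj_homeomorphism:
  fixes f :: "real \<Rightarrow> real"
  assumes mono: "strict_mono f" and surj: "surj f"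
  shows "homeomorphism UNIV UNIV f (inv_into UNIV f)" and "strict_mono (inv_into UNIV f)"
proof -
  have f_inv: "f (inv_into UNIV f y) = y" for y using surj by (simp add: surj_f_inv_f)
  have inv_f: "inv_into UNIV f (f x) = x" for x using mono by (simp add: strict_mono_imp_inj_on)
  show inv_mono: "strict_mono (inv_into UNIV f)"
  proof (rule strict_monoI)
    fix x y :: real assume "x < y"
    then show "inv_into UNIV f x < inv_into UNIV f y"
      using strict_mono_less_eq[OF mono, of "inv_into UNIV f y" "inv_into UNIV f x"]
      by (simp add: f_inv not_le[symmetric])
  qed
  have "isCont f x" for x
  proof (rule strict_mono_dense_range_isCont[OF mono])
    fix a b :: real assume "a < b"
    then show "\<exists>x. a < f x \<and> f x < b"
      by (intro exI[of _ "inv_into UNIV f ((a + b) / 2)"]) (simp add: f_inv)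
  qed
  moreover have "isCont (inv_into UNIV f) x" for x
  proof (rule strict_mono_dense_range_isCont[OF inv_mono])
    fix a b :: real assume "a < b"
    then show "\<exists>x. a < inv_into UNIV f x \<and> inv_into UNIV f x < b"
      by (intro exI[of _ "f ((a + b) / 2)"]) (simp add: inv_f)
  qed
  ultimately show "homeomorphism UNIV UNIV f (inv_into UNIV f)"
    by (intro homeomorphismI) (auto simp: continuous_at_imp_continuous_on f_inv inv_f)
qed

lemma bounded_monotone_orbit_fixpoint:
  fixes g :: "real \<Rightarrow> real"
  assumes cont: "continuous_on UNIV g"
    and "monoseq (\<lambda>n. (g ^^ n) x)" and "Bseq (\<lambda>n. (g ^^ n) x)"
  obtains L where "g L = L"
proof -
  obtain L where L: "(\<lambda>n. (g ^^ n) x) \<longlonglongrightarrow> L"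
    using assms Bseq_monoseq_convergent by (auto simp: convergent_def)
  moreover have "isCont g L"
    using cont by (simp add: continuous_on_eq_continuous_at)
  ultimately have "(\<lambda>n. g ((g ^^ n) x)) \<longlonglongrightarrow> g L"
    using isCont_tendsto_compose by blast
  moreover have "(\<lambda>n. g ((g ^^ n) x)) \<longlonglongrightarrow> L"
    using LIMSEQ_Suc[OF L] by simp
  ultimately show ?thesis using LIMSEQ_unique that by blast
qed

lemma funpow_commute: "(\<And>x. g (f x) = f (g x)) \<Longrightarrow> g ((f ^^ n) x) = (f ^^ n) (g x)"
  by (induction n) auto

lemma strict_mono_funpow: "strict_mono (f :: 'a::order \<Rightarrow> 'a) \<Longrightarrow> strict_mono (f ^^ n)"
  by (induction n) (auto simp: strict_mono_def)

lemma continuous_on_funpow: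
  fixes f :: "'a::topological_space \<Rightarrow> 'a"
  shows "continuous_on UNIV f \<Longrightarrow> continuous_on UNIV (f ^^ n)"
proof (induction n)
  case (Suc n)
  then show ?case using continuous_on_compose2[of UNIV f UNIV "f ^^ n"] by auto
qed (simp add: id_def)

section \<open>The unit circle as a quotient of the real line\<close>

definition exp_circle :: "real \<Rightarrow> complex" where
  "exp_circle t = exp (of_real (2 * pi * t) * \<i>)"

lemma exp_circle_eq_iff: "exp_circle u = exp_circle t \<longleftrightarrow> (\<exists>n::int. u = t + of_int n)"
proof
  assume "exp_circle u = exp_circle t"
  then obtain n where n: "of_real (2 * pi * u) * \<i> =
      of_real (2 * pi * t) * \<i> + of_real (of_int (2 * n) * pi) * \<i>"
    unfolding exp_circle_def exp_eq by blast
  have "2 * pi * u = 2 * pi * (t + of_int n)"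
    using arg_cong[OF n, of Im] by (simp add: algebra_simps)
  then have "u = t + of_int n" by simp
  then show "\<exists>n::int. u = t + of_int n" ..
next
  assume "\<exists>n::int. u = t + of_int n"
  then obtain n :: int where "u = t + of_int n" by blast
  then have "of_real (2 * pi * u) * \<i> =
      of_real (2 * pi * t) * \<i> + of_real (of_int (2 * n) * pi) * \<i>"
    by (simp add: algebra_simps)
  then show "exp_circle u = exp_circle t" unfolding exp_circle_def exp_eq by blast
qed

lemma int_shift_iff_nat_shift:
  fixes a b :: real
  shows "(\<exists>k::int. a = b + of_int k) \<longleftrightarrow> (\<exists>n::nat. b = a + of_nat n \<or> a = b + of_nat n)"
proof
  assume "\<exists>k::int. a = b + of_int k"
  then obtain k :: int where k: "a = b + of_int k" ..
  show "\<exists>n::nat. b = a + of_nat n \<or> a = b + of_nat n"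
  proof (cases "0 \<le> k")
    case True
    then show ?thesis using k by (intro exI[of _ "nat k"]) simp
  next
    case False
    then show ?thesis using k by (intro exI[of _ "nat (- k)"]) simp
  qed
next
  assume "\<exists>n::nat. b = a + of_nat n \<or> a = b + of_nat n"
  then obtain n :: nat where "b = a + of_nat n \<or> a = b + of_nat n" ..
  then show "\<exists>k::int. a = b + of_int k"
  proof
    assume "b = a + of_nat n"
    then show ?thesis by (intro exI[of _ "- int n"]) simp
  next
    assume "a = b + of_nat n"
    then show ?thesis by (intro exI[of _ "int n"]) simp
  qed
qed

lemma norm_exp_circle [simp]: "norm (exp_circle t) = 1"
  unfolding exp_circle_def by (metis mult.commute norm_exp_i_times)

lemma continuous_on_exp_circle: "continuous_on S exp_circle"
  unfolding exp_circle_def by (intro continuous_intros)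

lemma exp_circle_image_unit_interval: "exp_circle ` {0..1} = sphere 0 1"
proof
  show "sphere 0 1 \<subseteq> exp_circle ` {0..1}"
  proof
    fix z :: complex assume "z \<in> sphere 0 1"
    then have "z \<noteq> 0" "sgn z = z" by (auto simp: sgn_div_norm)
    define t where "t = Arg z / (2 * pi)"
    have "exp_circle t = z"
      using \<open>z \<noteq> 0\<close> \<open>sgn z = z\<close> cis_Arg[of z]
      unfolding t_def exp_circle_def cis_conv_exp by (simp add: mult.commute)
    moreover have "exp_circle (t - of_int \<lfloor>t\<rfloor>) = exp_circle t"
      unfolding exp_circle_eq_iff by (intro exI[of _ "- \<lfloor>t\<rfloor>"]) simp
    moreover have "t - of_int \<lfloor>t\<rfloor> \<in> {0..1}" by simp linarith
    ultimately show "z \<in> exp_circle ` {0..1}" by (metis rev_image_eqI)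
  qed
qed auto

lemma quotient_map_exp_circle: "quotient_map euclidean (top_of_set (sphere 0 1)) exp_circle"
  unfolding quotient_map_def
proof (intro conjI allI impI)
  show "exp_circle ` topspace euclidean = topspace (top_of_set (sphere 0 1))"
    using exp_circle_image_unit_interval by auto
  fix U assume "U \<subseteq> topspace (top_of_set (sphere (0::complex) 1))"
  then have U: "U \<subseteq> sphere 0 1" by simp
  have cont: "continuous_map euclidean (top_of_set (sphere 0 1)) exp_circle"
    by (simp add: continuous_map_in_subtopology continuous_on_exp_circle image_subset_iff)
  show "openin euclidean {x \<in> topspace euclidean. exp_circle x \<in> U} =
      openin (top_of_set (sphere 0 1)) U"
  proof
    assume "openin euclidean {x \<in> topspace euclidean. exp_circle x \<in> U}"
    then have "openin (top_of_set {0..1}) ({0..1} \<inter> exp_circle -` U)"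
      by (simp add: openin_open_Int vimage_def)
    then show "openin (top_of_set (sphere 0 1)) U"
      using Abstract_Topology_2.continuous_imp_quotient_map[OF continuous_on_exp_circle
          exp_circle_image_unit_interval compact_Icc U]
      by simp
  qed (use openin_continuous_map_preimage[OF cont] in blast)
qed

lemma quotient_map_lift_homeomorphism:
  fixes p :: "'a::topological_space \<Rightarrow> 'b::topological_space"
  assumes p: "quotient_map euclidean (top_of_set S) p"
    and cont: "continuous_on UNIV g" "continuous_on UNIV g'"
    and inverse: "\<And>x. g' (g x) = x" "\<And>x. g (g' x) = x"
    and fibres: "\<And>x y. p x = p y \<Longrightarrow> p (g x) = p (g y)" "\<And>x y. p x = p y \<Longrightarrow> p (g' x) = p (g' y)"
  shows "\<exists>h h'. homeomorphism S S h h' \<and> (\<forall>x. h (p x) = p (g x))"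
proof -
  have lift: "\<exists>k. continuous_on S k \<and> k ` S \<subseteq> S \<and> (\<forall>x. k (p x) = p (u x))"
    if u: "continuous_on UNIV u" and u_fibres: "\<And>x y. p x = p y \<Longrightarrow> p (u x) = p (u y)" for u
  proof -
    have "continuous_map euclidean euclidean u"
      using u by (simp add: continuous_map_iff_continuous2)
    then have cm: "continuous_map euclidean (top_of_set S) (p \<circ> u)"
      using continuous_map_compose quotient_imp_continuous_map[OF p] by blast
    have "\<And>x y. x \<in> topspace euclidean \<Longrightarrow> y \<in> topspace euclidean \<Longrightarrow> p x = p y \<Longrightarrow>
        (p \<circ> u) x = (p \<circ> u) y"
      unfolding comp_apply by (rule u_fibres)
    then show ?thesis
      by (rule quotient_map_lift_exists[OF p cm]) (auto simp: continuous_map_subtopology_eu)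
  qed
  obtain h where h: "continuous_on S h" "h ` S \<subseteq> S" "\<And>x. h (p x) = p (g x)"
    using lift[OF cont(1) fibres(1)] by blast
  obtain h' where h': "continuous_on S h'" "h' ` S \<subseteq> S" "\<And>x. h' (p x) = p (g' x)"
    using lift[OF cont(2) fibres(2)] by blast
  have inverse_on: "h' (h w) = w" "h (h' w) = w" if w: "w \<in> S" for w
  proof -
    obtain x where "w = p x" using quotient_imp_surjective_map[OF p] w by auto
    then show "h' (h w) = w" "h (h' w) = w" by (simp_all add: h(3) h'(3) inverse)
  qed
  have "homeomorphism S S h h'"
    by (rule homeomorphismI[OF h(1) h'(1) h(2) h'(2) inverse_on])
  then show ?thesis using h(3) by blast
qed

section \<open>Orbit spaces of increasing homeomorphisms without fixed points\<close>

locale positive_shift =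
  fixes f :: "real \<Rightarrow> real"
  assumes strict_mono: "strict_mono f" and surj: "surj f" and less_shift: "\<And>x. x < f x"
begin

lemma homeomorphism_inv: "homeomorphism UNIV UNIV f (inv_into UNIV f)"
  and strict_mono_inv: "strict_mono (inv_into UNIV f)"
  using strict_mono_surj_homeomorphism[OF strict_mono surj] by auto

lemma f_inv [simp]: "f (inv_into UNIV f x) = x" and inv_f [simp]: "inv_into UNIV f (f x) = x"
  using homeomorphism_inv by (auto simp: homeomorphism_def)

lemma continuous_on_f: "continuous_on UNIV f"
  and continuous_on_inv: "continuous_on UNIV (inv_into UNIV f)"
  using homeomorphism_inv by (auto simp: homeomorphism_def)

lemma inv_less: "inv_into UNIV f x < x"
  using less_shift[of "inv_into UNIV f x"] by simp

lemma le_funpow: "x \<le> (f ^^ n) x"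
  by (induction n) (auto intro: order.trans less_imp_le[OF less_shift])

lemma funpow_inv_le: "(inv_into UNIV f ^^ n) x \<le> x"
  by (induction n) (auto intro: order.trans less_imp_le[OF inv_less])

lemma funpow_unbounded: obtains n where "y \<le> (f ^^ n) 0"
proof (rule ccontr)
  assume "\<not> thesis"
  then have below: "(f ^^ n) 0 < y" for n using that by (meson not_le)
  have "\<bar>(f ^^ n) 0\<bar> \<le> \<bar>y\<bar>" for n using below[of n] le_funpow[of 0 n] by arith
  then have "Bseq (\<lambda>n. (f ^^ n) 0)" by (intro BseqI'[of _ "\<bar>y\<bar>"]) auto
  moreover have "monoseq (\<lambda>n. (f ^^ n) 0)"
    by (intro incseq_imp_monoseq incseq_SucI) (simp add: less_imp_le[OF less_shift])
  ultimately show False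
    using bounded_monotone_orbit_fixpoint[OF continuous_on_f] less_shift by (metis less_irrefl)
qed

lemma funpow_inv_unbounded: obtains n where "(inv_into UNIV f ^^ n) 0 \<le> y"
proof (rule ccontr)
  assume "\<not> thesis"
  then have above: "y < (inv_into UNIV f ^^ n) 0" for n using that by (meson not_le)
  have "\<bar>(inv_into UNIV f ^^ n) 0\<bar> \<le> \<bar>y\<bar>" for n using above[of n] funpow_inv_le[of n 0] by arith
  then have "Bseq (\<lambda>n. (inv_into UNIV f ^^ n) 0)" by (intro BseqI'[of _ "\<bar>y\<bar>"]) auto
  moreover have "monoseq (\<lambda>n. (inv_into UNIV f ^^ n) 0)"
    by (intro decseq_imp_monoseq decseq_SucI) (simp add: less_imp_le[OF inv_less])
  ultimately show False
    using bounded_monotone_orbit_fixpoint[OF continuous_on_inv] inv_less by (metis less_irrefl)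
qed

definition pow_int :: "int \<Rightarrow> real \<Rightarrow> real" where
  "pow_int k = (if 0 \<le> k then f ^^ nat k else inv_into UNIV f ^^ nat (- k))"

lemma pow_int_succ: "pow_int (k + 1) x = f (pow_int k x)"
proof (cases "0 \<le> k")
  case True
  then have "nat (k + 1) = Suc (nat k)" by simp
  with True show ?thesis by (simp add: pow_int_def)
next
  case False
  then have "nat (- k) = Suc (nat (- (k + 1)))" and "0 \<le> k + 1 \<longleftrightarrow> k = -1"
    by auto
  with False show ?thesis by (auto simp: pow_int_def)
qed

lemma pow_int_add_nat: "pow_int (k + int n) x = (f ^^ n) (pow_int k x)"
proof (induction n)
  case (Suc n)
  have "pow_int (k + int (Suc n)) x = pow_int ((k + int n) + 1) x" by (simp add: algebra_simps)
  with Suc show ?case by (simp add: pow_int_succ)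
qed (simp add: pow_int_def)

lemma pow_int_f: "pow_int k (f x) = f (pow_int k x)"
proof -
  have "(inv_into UNIV f ^^ n) (f x) = f ((inv_into UNIV f ^^ n) x)" for n
    by (rule funpow_commute[symmetric]) simp
  then show ?thesis by (simp add: pow_int_def funpow_swap1)
qed

lemma strict_mono_pow_int: "strict_mono (pow_int k)"
  by (simp add: pow_int_def strict_mono_funpow strict_mono strict_mono_inv)

lemma continuous_on_pow_int: "continuous_on UNIV (pow_int k)"
  by (simp add: pow_int_def continuous_on_funpow continuous_on_f continuous_on_inv)

lemma pow_int_mono: "k \<le> l \<Longrightarrow> pow_int k x \<le> pow_int l x"
  using pow_int_add_nat[of k "nat (l - k)" x] le_funpow by simp

definition conjugacy :: "real \<Rightarrow> real" where
  "conjugacy t = pow_int \<lfloor>t\<rfloor> (f 0 * (t - of_int \<lfloor>t\<rfloor>))"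

lemma conjugacy_int [simp]: "conjugacy (of_int k) = pow_int k 0"
  by (simp add: conjugacy_def)

lemma conjugacy_eq_pow_int:
  assumes "of_int n \<le> t" "t \<le> of_int n + 1"
  shows "conjugacy t = pow_int n (f 0 * (t - of_int n))"
proof (cases "t < of_int n + 1")
  case True
  then have "\<lfloor>t\<rfloor> = n" using assms by linarith
  then show ?thesis by (simp add: conjugacy_def)
next
  case False
  then have "t = of_int (n + 1)" using assms by simp
  then show ?thesis by (simp add: conjugacy_def pow_int_succ pow_int_f)
qed

lemma conjugacy_succ: "conjugacy (t + 1) = f (conjugacy t)"
  by (simp add: conjugacy_def pow_int_succ)

lemma conjugacy_add_nat: "conjugacy (t + of_nat n) = (f ^^ n) (conjugacy t)"
proof (induction n)
  case (Suc n)
  have "t + of_nat (Suc n) = (t + of_nat n) + 1" by simp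
  with Suc show ?case by (simp only: conjugacy_succ) simp
qed simp

lemma continuous_on_conjugacy: "continuous_on UNIV conjugacy"
proof (intro continuous_at_imp_continuous_on ballI)
  fix t :: real
  have piece: "continuous_on {of_int n..of_int n + 1} conjugacy" for n
  proof (rule continuous_on_eq)
    show "continuous_on {of_int n..of_int n + 1} (\<lambda>t. pow_int n (f 0 * (t - of_int n)))"
      by (intro continuous_on_compose2[OF continuous_on_pow_int] continuous_intros) auto
  qed (use conjugacy_eq_pow_int in auto)
  define n where "n = \<lfloor>t\<rfloor>"
  have "continuous_on ({of_int n - 1..of_int n} \<union> {of_int n..of_int n + 1}) conjugacy"
    using piece[of "n - 1"] piece[of n] by (intro continuous_on_closed_Un) auto
  moreover have "{of_int n - 1..of_int n} \<union> {of_int n..of_int n + 1} = {of_int n - 1..of_int n + (1::real)}"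
    by auto
  moreover have "t \<in> interior {of_int n - 1..of_int n + (1::real)}"
    unfolding n_def by simp linarith
  ultimately show "isCont conjugacy t"
    using continuous_on_interior by metis
qed

lemma strict_mono_conjugacy: "strict_mono conjugacy"
proof (rule strict_monoI)
  fix s t :: real assume "s < t"
  define n m where "n = \<lfloor>s\<rfloor>" and "m = \<lfloor>t\<rfloor>"
  have s: "of_int n \<le> s" "s < of_int n + 1" and t: "of_int m \<le> t" "t < of_int m + 1"
    unfolding n_def m_def by linarith+
  have piece_less: "conjugacy u < conjugacy v"
    if "of_int k \<le> u" "u < v" "v \<le> of_int k + 1" for k u v
  proof -
    have "f 0 * (u - of_int k) < f 0 * (v - of_int k)" using that less_shift[of 0] by simp
    then show ?thesis using that conjugacy_eq_pow_int[of k u] conjugacy_eq_pow_int[of k v]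
      strict_mono_pow_int[of k] by (simp add: strict_mono_less)
  qed
  show "conjugacy s < conjugacy t"
  proof (cases "n = m")
    case True
    then show ?thesis using piece_less[of n s t] s t \<open>s < t\<close> by simp
  next
    case False
    then have "n + 1 \<le> m" using \<open>s < t\<close> unfolding n_def m_def by (smt (verit) floor_mono)
    have "conjugacy s < conjugacy (of_int (n + 1))"
      using piece_less[of n s "of_int n + 1"] s by simp
    also have "\<dots> \<le> conjugacy (of_int m)"
      using \<open>n + 1 \<le> m\<close> by (simp add: pow_int_mono del: of_int_add)
    also have "\<dots> \<le> conjugacy t"
      using t piece_less[of m "of_int m" t] by (cases "t = of_int m") auto
    finally show ?thesis .
  qed
qed

lemma surj_conjugacy: "surj conjugacy"
proof -
  have "y \<in> range conjugacy" for y
  proof -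
    obtain n1 n2 where n12: "(inv_into UNIV f ^^ n2) 0 \<le> y" "y \<le> (f ^^ n1) 0"
      using funpow_inv_unbounded funpow_unbounded by metis
    have "conjugacy (- real n2) = (inv_into UNIV f ^^ n2) 0"
      using conjugacy_int[of "- int n2"] by (simp add: pow_int_def)
    moreover have "conjugacy (real n1) = (f ^^ n1) 0"
      using conjugacy_int[of "int n1"] by (simp add: pow_int_def)
    moreover have "continuous_on {- real n2..real n1} conjugacy"
      using continuous_on_conjugacy by (rule continuous_on_subset) simp
    ultimately obtain x where "conjugacy x = y"
      using IVT'[of conjugacy "- real n2" y "real n1"] n12 by auto
    then show ?thesis by blast
  qed
  then show ?thesis by blast
qed

lemma conjugacy_inv [simp]: "conjugacy (inv_into UNIV conjugacy x) = x"
  using surj_conjugacy by (simp add: surj_f_inv_f)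

lemma inv_conjugacy [simp]: "inv_into UNIV conjugacy (conjugacy x) = x"
  using strict_mono_conjugacy by (simp add: strict_mono_imp_inj_on)

lemma inv_conjugacy_eq_iff [simp]:
  "inv_into UNIV conjugacy x = inv_into UNIV conjugacy y \<longleftrightarrow> x = y"
  by (metis conjugacy_inv)

lemma inv_conjugacy_funpow:
  "inv_into UNIV conjugacy ((f ^^ n) x) = inv_into UNIV conjugacy x + of_nat n"
proof -
  have "(f ^^ n) x = conjugacy (inv_into UNIV conjugacy x + of_nat n)"
    by (simp add: conjugacy_add_nat)
  then show ?thesis by (simp only: inv_conjugacy)
qed

definition circle_proj :: "real \<Rightarrow> complex" where
  "circle_proj = exp_circle \<circ> inv_into UNIV conjugacy"

lemma circle_proj_eq_iff:
  "circle_proj x = circle_proj y \<longleftrightarrow> (\<exists>n. y = (f ^^ n) x \<or> x = (f ^^ n) y)"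
proof -
  have "circle_proj x = circle_proj y \<longleftrightarrow>
      (\<exists>k::int. inv_into UNIV conjugacy x = inv_into UNIV conjugacy y + of_int k)"
    by (simp add: circle_proj_def exp_circle_eq_iff)
  also have "\<dots> \<longleftrightarrow> (\<exists>n. y = (f ^^ n) x \<or> x = (f ^^ n) y)"
    by (simp add: int_shift_iff_nat_shift flip: inv_conjugacy_funpow)
  finally show ?thesis .
qed

lemma quotient_map_circle_proj: "quotient_map euclidean (top_of_set (sphere 0 1)) circle_proj"
proof -
  have "homeomorphic_maps euclidean euclidean (inv_into UNIV conjugacy) conjugacy"
    using strict_mono_surj_homeomorphism(1)[OF strict_mono_conjugacy surj_conjugacy]
    by (auto simp: homeomorphic_maps_def homeomorphism_def continuous_map_iff_continuous2)
  then have "quotient_map euclidean euclidean (inv_into UNIV conjugacy)"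
    using homeomorphic_maps_imp_map homeomorphic_map_def by blast
  then show ?thesis
    unfolding circle_proj_def using quotient_map_exp_circle by (rule quotient_map_compose)
qed

lemma circle_proj_lift_homeomorphism:
  assumes "continuous_on UNIV g" "continuous_on UNIV g'" "\<And>x. g' (g x) = x" "\<And>x. g (g' x) = x"
    and commute: "\<And>x. g (f x) = f (g x)"
  shows "\<exists>h h'. homeomorphism (sphere 0 1) (sphere 0 1) h h' \<and>
    (\<forall>x. h (circle_proj x) = circle_proj (g x))"
proof -
  have commute': "g' (f x) = f (g' x)" for x
    by (metis assms(3,4) commute)
  have fibres: "circle_proj (u x) = circle_proj (u y)"
    if xy: "circle_proj x = circle_proj y" and u: "\<And>x. u (f x) = f (u x)" for u x y
  proof -
    obtain n where "y = (f ^^ n) x \<or> x = (f ^^ n) y"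
      using xy circle_proj_eq_iff by blast
    then have "u y = (f ^^ n) (u x) \<or> u x = (f ^^ n) (u y)"
      using funpow_commute[of u f n] u by auto
    then show ?thesis unfolding circle_proj_eq_iff by blast
  qed
  show ?thesis
    by (rule quotient_map_lift_homeomorphism[OF quotient_map_circle_proj assms(1-4)])
      (use fibres commute commute' in blast)+
qed

end

section \<open>Contractible intervals of an action on the line\<close>

locale real_action = group G for G :: "('a, 'b) monoid_scheme" (structure) +
  fixes \<psi> :: "'a \<Rightarrow> real \<Rightarrow> real"
  assumes action: "or_action G \<psi>"
begin

lemma strict_mono_act: "g \<in> carrier G \<Longrightarrow> strict_mono (\<psi> g)"
  using action by (simp add: or_action_def or_homeo_def)

lemma continuous_on_act: "g \<in> carrier G \<Longrightarrow> continuous_on UNIV (\<psi> g)"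
  using action unfolding or_action_def or_homeo_def homeomorphism_def by blast

lemma act_mult: "g \<in> carrier G \<Longrightarrow> h \<in> carrier G \<Longrightarrow> \<psi> (g \<otimes> h) x = \<psi> g (\<psi> h x)"
  using action by (simp add: or_action_def)

lemma act_one [simp]: "\<psi> \<one> x = x"
  using action by (simp add: or_action_def)

lemma act_inv_act [simp]: "g \<in> carrier G \<Longrightarrow> \<psi> (inv g) (\<psi> g x) = x"
  by (simp flip: act_mult)

lemma act_act_inv [simp]: "g \<in> carrier G \<Longrightarrow> \<psi> g (\<psi> (inv g) x) = x"
  by (simp flip: act_mult)

lemma act_less_iff [simp]: "g \<in> carrier G \<Longrightarrow> \<psi> g x < \<psi> g y \<longleftrightarrow> x < y"
  using strict_mono_act strict_mono_less by blast

lemma act_le_iff [simp]: "g \<in> carrier G \<Longrightarrow> \<psi> g x \<le> \<psi> g y \<longleftrightarrow> x \<le> y"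
  using strict_mono_act strict_mono_less_eq by blast

lemma act_eq_iff [simp]: "g \<in> carrier G \<Longrightarrow> \<psi> g x = \<psi> g y \<longleftrightarrow> x = y"
  by (metis act_inv_act)

lemma Inf_act_image:
  assumes "g \<in> carrier G" "I \<noteq> {}" "bdd_below I"
  shows "Inf (\<psi> g ` I) = \<psi> g (Inf I)"
proof -
  have "continuous (at_right (Inf I)) (\<psi> g)"
    using continuous_on_act[OF assms(1)]
    by (simp add: continuous_on_eq_continuous_at continuous_at_imp_continuous_at_within)
  then show ?thesis
    using continuous_at_Inf_mono[of "\<psi> g" I] strict_mono_act[OF assms(1)] assms(2,3)
    by (simp add: strict_mono_mono)
qed

lemma Sup_act_image:
  assumes "g \<in> carrier G" "I \<noteq> {}" "bdd_above I"
  shows "Sup (\<psi> g ` I) = \<psi> g (Sup I)"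
proof -
  have "continuous (at_left (Sup I)) (\<psi> g)"
    using continuous_on_act[OF assms(1)]
    by (simp add: continuous_on_eq_continuous_at continuous_at_imp_continuous_at_within)
  then show ?thesis
    using continuous_at_Sup_mono[of "\<psi> g" I] strict_mono_act[OF assms(1)] assms(2,3)
    by (simp add: strict_mono_mono)
qed

definition contractible_pair :: "real \<Rightarrow> real \<Rightarrow> bool" where
  "contractible_pair a b \<longleftrightarrow> (\<exists>s p. (\<forall>n. s n \<in> carrier G) \<and>
     (\<lambda>n. \<psi> (s n) a) \<longlonglongrightarrow> p \<and> (\<lambda>n. \<psi> (s n) b) \<longlonglongrightarrow> p)"

lemma contractible_iff_contractible_pair:
  assumes "I \<noteq> {}" "bounded I"
  shows "contractible G \<psi> I \<longleftrightarrow> contractible_pair (Inf I) (Sup I)"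
proof -
  have bdd: "bdd_below I" "bdd_above I"
    using assms(2) by (simp_all add: bounded_imp_bdd_below bounded_imp_bdd_above)
  have images: "(\<lambda>n. Inf (\<psi> (s n) ` I)) = (\<lambda>n. \<psi> (s n) (Inf I))"
      "(\<lambda>n. Sup (\<psi> (s n) ` I)) = (\<lambda>n. \<psi> (s n) (Sup I))" if "\<forall>n. s n \<in> carrier G" for s
    using that Inf_act_image Sup_act_image assms(1) bdd by auto
  show ?thesis
  proof
    assume "contractible G \<psi> I"
    then obtain s p where "\<forall>n. s n \<in> carrier G"
      "(\<lambda>n. Inf (\<psi> (s n) ` I)) \<longlonglongrightarrow> p" "(\<lambda>n. Sup (\<psi> (s n) ` I)) \<longlonglongrightarrow> p"
      unfolding contractible_def by blast
    then show "contractible_pair (Inf I) (Sup I)"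
      unfolding contractible_pair_def by (intro exI[of _ s] exI[of _ p]) (simp add: images)
  next
    assume "contractible_pair (Inf I) (Sup I)"
    then obtain s p where "\<forall>n. s n \<in> carrier G"
      "(\<lambda>n. \<psi> (s n) (Inf I)) \<longlonglongrightarrow> p" "(\<lambda>n. \<psi> (s n) (Sup I)) \<longlonglongrightarrow> p"
      unfolding contractible_pair_def by blast
    then show "contractible G \<psi> I"
      unfolding contractible_def by (intro exI[of _ s] exI[of _ p]) (simp add: images)
  qed
qed

lemma contractible_atLeastAtMost_iff:
  "a \<le> b \<Longrightarrow> contractible G \<psi> {a..b} \<longleftrightarrow> contractible_pair a b"
  using contractible_iff_contractible_pair[of "{a..b}"] by simp

lemma contractible_pair_act:
  assumes "contractible_pair a b" "h \<in> carrier G"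
  shows "contractible_pair (\<psi> h a) (\<psi> h b)"
proof -
  obtain s p where s: "\<forall>n. s n \<in> carrier G" "(\<lambda>n. \<psi> (s n) a) \<longlonglongrightarrow> p" "(\<lambda>n. \<psi> (s n) b) \<longlonglongrightarrow> p"
    using assms(1) unfolding contractible_pair_def by blast
  have "\<psi> (s n \<otimes> inv h) (\<psi> h x) = \<psi> (s n) x" for n x
    using s(1) assms(2) by (simp add: act_mult)
  moreover have "s n \<otimes> inv h \<in> carrier G" for n
    using s(1) assms(2) by simp
  ultimately show ?thesis
    unfolding contractible_pair_def using s(2,3) by (intro exI[of _ "\<lambda>n. s n \<otimes> inv h"] exI[of _ p]) simp
qed

lemma contractible_pair_subinterval:
  assumes "contractible_pair a b" "a \<le> a'" "a' \<le> b'" "b' \<le> b"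
  shows "contractible_pair a' b'"
proof -
  obtain s p where s: "\<forall>n. s n \<in> carrier G" "(\<lambda>n. \<psi> (s n) a) \<longlonglongrightarrow> p" "(\<lambda>n. \<psi> (s n) b) \<longlonglongrightarrow> p"
    using assms(1) unfolding contractible_pair_def by blast
  have between: "(\<lambda>n. \<psi> (s n) x) \<longlonglongrightarrow> p" if "a \<le> x" "x \<le> b" for x
    by (rule tendsto_sandwich[OF _ _ s(2) s(3)]) (use s(1) that in auto)
  show ?thesis
    unfolding contractible_pair_def using s(1) between[of a'] between[of b'] assms(2-4)
    by (intro exI[of _ s] exI[of _ p]) simp
qed

end

locale minimal_real_action = real_action +
  assumes minimal: "minimal_action G \<psi>"
begin

lemma orbit_meets_interval:
  assumes "a < b"
  obtains g where "g \<in> carrier G" "a < \<psi> g x" "\<psi> g x < b"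
proof -
  have "closure {\<psi> g x | g. g \<in> carrier G} = UNIV"
    using minimal unfolding minimal_action_def by blast
  then have "{a<..<b} \<inter> {\<psi> g x | g. g \<in> carrier G} \<noteq> {}"
    using open_Int_closure_eq_empty[of "{a<..<b}" "{\<psi> g x | g. g \<in> carrier G}"] assms by simp
  then obtain g where "g \<in> carrier G" "\<psi> g x \<in> {a<..<b}" by blast
  then show ?thesis using that by simp
qed

end

locale partially_contractible_action = minimal_real_action +
  assumes contractible_interval:
      "\<exists>I. is_interval I \<and> bounded I \<and> (\<exists>a b. a < b \<and> a \<in> I \<and> b \<in> I) \<and> contractible G \<psi> I"
    and noncontractible_interval:
      "\<exists>I. is_interval I \<and> bounded I \<and> I \<noteq> {} \<and> \<not> contractible G \<psi> I"
begin

lemma contractible_pair_exists: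
  obtains a b where "a < b" "contractible_pair a b"
proof -
  obtain I a b where I: "bounded I" "a < b" "a \<in> I" "b \<in> I" "contractible G \<psi> I"
    using contractible_interval by blast
  then have "Inf I \<le> a" "b \<le> Sup I"
    by (simp_all add: cInf_lower cSup_upper bounded_imp_bdd_below bounded_imp_bdd_above)
  moreover have "contractible_pair (Inf I) (Sup I)"
    using I contractible_iff_contractible_pair[of I] by auto
  ultimately have "contractible_pair a b"
    using contractible_pair_subinterval[of "Inf I" "Sup I" a b] I(2) by simp
  with I(2) show ?thesis by (rule that)
qed

lemma noncontractible_pair_exists:
  obtains c d where "c \<le> d" "\<not> contractible_pair c d"
proof -
  obtain J where J: "bounded J" "J \<noteq> {}" "\<not> contractible G \<psi> J"
    using noncontractible_interval by blast
  then have "Inf J \<le> Sup J"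
    by (simp add: cInf_le_cSup bounded_imp_bdd_below bounded_imp_bdd_above)
  moreover have "\<not> contractible_pair (Inf J) (Sup J)"
    using J contractible_iff_contractible_pair by simp
  ultimately show ?thesis by (rule that)
qed

abbreviation \<phi> :: "real \<Rightarrow> real" where
  "\<phi> \<equiv> contr_sup G \<psi>"

lemma contractible_right_ends_eq:
  "{y. y > x \<and> contractible G \<psi> {x..y}} = {y. x < y \<and> contractible_pair x y}"
  using contractible_atLeastAtMost_iff by auto

lemma contractible_right_ends_nonempty: "{y. y > x \<and> contractible G \<psi> {x..y}} \<noteq> {}"
proof -
  obtain a b where ab: "a < b" "contractible_pair a b"
    using contractible_pair_exists .
  obtain g where g: "g \<in> carrier G" "a < \<psi> g x" "\<psi> g x < b"
    using orbit_meets_interval[OF ab(1)] .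
  have "contractible_pair (\<psi> g x) b"
    using contractible_pair_subinterval[OF ab(2)] g by simp
  then have "contractible_pair x (\<psi> (inv g) b)"
    using contractible_pair_act[OF _ inv_closed[OF g(1)]] g(1) by force
  moreover have "x < \<psi> (inv g) b"
    using act_less_iff[of "inv g" "\<psi> g x" b] g by simp
  ultimately show ?thesis
    unfolding contractible_right_ends_eq by blast
qed

lemma bdd_above_contractible_right_ends: "bdd_above {y. y > x \<and> contractible G \<psi> {x..y}}"
proof -
  obtain c d where cd: "c \<le> d" "\<not> contractible_pair c d"
    using noncontractible_pair_exists .
  obtain g where g: "g \<in> carrier G" "x < \<psi> g c"
    using orbit_meets_interval[of x "x + 1" c] by auto
  have "y \<le> \<psi> g d" if "x < y" "contractible_pair x y" for y
  proof (rule ccontr)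
    assume "\<not> y \<le> \<psi> g d"
    then have "contractible_pair (\<psi> g c) (\<psi> g d)"
      using contractible_pair_subinterval[OF that(2)] g cd(1) by simp
    then have "contractible_pair c d"
      using contractible_pair_act[OF _ inv_closed[OF g(1)]] g(1) by force
    with cd(2) show False ..
  qed
  then show ?thesis
    unfolding contractible_right_ends_eq by (intro bdd_aboveI[of _ "\<psi> g d"]) auto
qed

lemma contr_sup_upper: "x < y \<Longrightarrow> contractible_pair x y \<Longrightarrow> y \<le> \<phi> x"
  unfolding contr_sup_def contractible_right_ends_eq
  using bdd_above_contractible_right_ends[of x, unfolded contractible_right_ends_eq]
  by (auto intro: cSup_upper)

lemma contr_sup_least: "(\<And>y. x < y \<Longrightarrow> contractible_pair x y \<Longrightarrow> y \<le> b) \<Longrightarrow> \<phi> x \<le> b"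
  unfolding contr_sup_def contractible_right_ends_eq
  using contractible_right_ends_nonempty[of x, unfolded contractible_right_ends_eq]
  by (auto intro: cSup_least)

lemma less_contr_sup: "x < \<phi> x"
proof -
  obtain y where "x < y" "contractible_pair x y"
    using contractible_right_ends_nonempty[of x] unfolding contractible_right_ends_eq by blast
  then have "y \<le> \<phi> x" by (rule contr_sup_upper)
  with \<open>x < y\<close> show ?thesis by simp
qed

lemma mono_contr_sup: "x \<le> x' \<Longrightarrow> \<phi> x \<le> \<phi> x'"
proof (rule contr_sup_least)
  fix y assume "x \<le> x'" "x < y" "contractible_pair x y"
  show "y \<le> \<phi> x'"
  proof (cases "y \<le> x'")
    case True
    then show ?thesis using less_contr_sup[of x'] by simp
  next
    case False
    then have "contractible_pair x' y"
      using contractible_pair_subinterval[OF \<open>contractible_pair x y\<close> \<open>x \<le> x'\<close>] by simp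
    then show ?thesis using contr_sup_upper False by simp
  qed
qed

lemma contr_sup_act_le: "g \<in> carrier G \<Longrightarrow> \<phi> (\<psi> g x) \<le> \<psi> g (\<phi> x)"
proof (rule contr_sup_least)
  fix y assume g: "g \<in> carrier G" and "\<psi> g x < y" "contractible_pair (\<psi> g x) y"
  then have "x < \<psi> (inv g) y" "contractible_pair x (\<psi> (inv g) y)"
    using act_less_iff[of "inv g" "\<psi> g x" y] contractible_pair_act[OF _ inv_closed[OF g]] by force+
  then have "\<psi> (inv g) y \<le> \<phi> x" by (rule contr_sup_upper)
  then show "y \<le> \<psi> g (\<phi> x)"
    using act_le_iff[of g "\<psi> (inv g) y" "\<phi> x"] g by simp
qed

lemma contr_sup_act: "g \<in> carrier G \<Longrightarrow> \<phi> (\<psi> g x) = \<psi> g (\<phi> x)"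
proof -
  assume g: "g \<in> carrier G"
  have "\<phi> x \<le> \<psi> (inv g) (\<phi> (\<psi> g x))"
    using contr_sup_act_le[of "inv g" "\<psi> g x"] g by simp
  then have "\<psi> g (\<phi> x) \<le> \<phi> (\<psi> g x)"
    using act_le_iff[of g "\<phi> x" "\<psi> (inv g) (\<phi> (\<psi> g x))"] g by simp
  then show ?thesis using contr_sup_act_le[OF g, of x] by linarith
qed

text \<open>If \<open>\<phi>\<close> were constant on \<open>(a, b)\<close>, every point would have a neighbourhood carried into
  \<open>(a, b)\<close> by some \<open>\<psi> g\<close>, on which \<open>\<phi>\<close> is then constant by equivariance.\<close>
lemma strict_mono_contr_sup: "strict_mono \<phi>"
proof (rule ccontr)
  assume "\<not> strict_mono \<phi>"
  then obtain a b where "a < b" "\<phi> b \<le> \<phi> a"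
    unfolding strict_mono_def by (auto simp: not_less)
  have flat: "\<phi> t = \<phi> a" if "t \<in> {a<..<b}" for t
  proof -
    have "\<phi> a \<le> \<phi> t" "\<phi> t \<le> \<phi> b"
      using that mono_contr_sup by simp_all
    with \<open>\<phi> b \<le> \<phi> a\<close> show ?thesis by linarith
  qed
  have "\<phi> constant_on UNIV"
  proof (rule locally_constant_imp_constant[OF connected_UNIV])
    fix y
    obtain g where g: "g \<in> carrier G" "a < \<psi> g y" "\<psi> g y < b"
      using orbit_meets_interval[OF \<open>a < b\<close>] .
    define T where "T = \<psi> g -` {a<..<b}"
    have "openin (top_of_set UNIV) T"
      unfolding T_def using continuous_on_act[OF g(1)] by (simp add: open_vimage)
    moreover have "\<phi> t = \<phi> y" if "t \<in> T" for t
    proof -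
      have "\<phi> (\<psi> g t) = \<phi> (\<psi> g y)"
        using that g flat[of "\<psi> g t"] flat[of "\<psi> g y"] unfolding T_def by simp
      then have "\<psi> g (\<phi> t) = \<psi> g (\<phi> y)"
        by (simp only: contr_sup_act[OF g(1)])
      then show ?thesis using g(1) by simp
    qed
    moreover have "y \<in> T"
      using g by (simp add: T_def)
    ultimately show "\<exists>T. openin (top_of_set UNIV) T \<and> y \<in> T \<and> (\<forall>x\<in>T. \<phi> x = \<phi> y)"
      by blast
  qed
  then obtain c where "\<forall>x. \<phi> x = c"
    by (auto simp: constant_on_def)
  then have "\<phi> (\<phi> 0) = \<phi> 0"
    by simp
  then show False using less_contr_sup[of "\<phi> 0"] by simp
qed

lemma surj_contr_sup: "surj \<phi>"
proof (rule strict_mono_dense_range_surj[OF strict_mono_contr_sup])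
  fix a b :: real assume "a < b"
  then obtain g where g: "g \<in> carrier G" "a < \<psi> g (\<phi> 0)" "\<psi> g (\<phi> 0) < b"
    using orbit_meets_interval by blast
  then show "\<exists>x. a < \<phi> x \<and> \<phi> x < b"
    by (intro exI[of _ "\<psi> g 0"]) (simp add: contr_sup_act)
qed

lemma or_homeo_contr_sup: "or_homeo \<phi>"
  unfolding or_homeo_def
  using strict_mono_surj_homeomorphism[OF strict_mono_contr_sup surj_contr_sup]
    strict_mono_contr_sup by blast

lemma contr_sup_comp_act: "g \<in> carrier G \<Longrightarrow> \<phi> \<circ> \<psi> g = \<psi> g \<circ> \<phi>"
  by (simp add: fun_eq_iff contr_sup_act)

sublocale contr_sup: positive_shift \<phi>
  by unfold_locales (fact strict_mono_contr_sup surj_contr_sup less_contr_sup)+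

lemma act_descends_to_circle:
  assumes "g \<in> carrier G"
  shows "\<exists>h h'. homeomorphism (sphere 0 1) (sphere 0 1) h h' \<and>
    (\<forall>x. h (contr_sup.circle_proj x) = contr_sup.circle_proj (\<psi> g x))"
  by (rule contr_sup.circle_proj_lift_homeomorphism[OF continuous_on_act[OF assms]
      continuous_on_act[OF inv_closed[OF assms]]]) (simp_all add: assms contr_sup_act)

end

theorem mainTheorem6:
  fixes G :: "('a, 'b) monoid_scheme" and \<psi> :: "'a \<Rightarrow> real \<Rightarrow> real"
  assumes "fin_gen_group G"
    and "or_action G \<psi>"
    and "minimal_action G \<psi>"
    and "\<exists>I. is_interval I \<and> bounded I \<and> (\<exists>a b. a < b \<and> a \<in> I \<and> b \<in> I) \<and> contractible G \<psi> I"
    and "\<exists>I. is_interval I \<and> bounded I \<and> I \<noteq> {} \<and> \<not> contractible G \<psi> I"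
  shows "(\<forall>x. {y. y > x \<and> contractible G \<psi> {x..y}} \<noteq> {}
              \<and> bdd_above {y. y > x \<and> contractible G \<psi> {x..y}})
    \<and> or_homeo (contr_sup G \<psi>)
    \<and> (\<forall>x. contr_sup G \<psi> x > x)
    \<and> (\<forall>g\<in>carrier G. contr_sup G \<psi> \<circ> \<psi> g = \<psi> g \<circ> contr_sup G \<psi>)
    \<and> (\<exists>p :: real \<Rightarrow> complex.
         quotient_map euclidean (subtopology euclidean (sphere 0 1)) p
       \<and> (\<forall>x y. p x = p y \<longleftrightarrow>
             (\<exists>n. y = (contr_sup G \<psi> ^^ n) x \<or> x = (contr_sup G \<psi> ^^ n) y))
       \<and> (\<forall>g\<in>carrier G. \<exists>h h'. homeomorphism (sphere 0 1) (sphere 0 1) h h'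
             \<and> (\<forall>x. h (p x) = p (\<psi> g x))))"
proof -
  have "group G" using assms(1) by (simp add: fin_gen_group_def)
  then interpret partially_contractible_action G \<psi>
    using assms(2-5)
    by (simp add: partially_contractible_action_def partially_contractible_action_axioms_def
        minimal_real_action_def minimal_real_action_axioms_def real_action_def real_action_axioms_def)
  show ?thesis
    by (intro conjI allI ballI exI[of _ contr_sup.circle_proj] contractible_right_ends_nonempty
        bdd_above_contractible_right_ends or_homeo_contr_sup less_contr_sup contr_sup_comp_act
        contr_sup.quotient_map_circle_proj contr_sup.circle_proj_eq_iff act_descends_to_circle)
qed

end
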